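(* Let \(G\) be a connected complex reductive group with a fixed Borel subgroup \(B\), maximal torus \(T\subset B\), positive roots \(R^+\), and \(\varpi=\frac12\sum_{\alpha\in R^+}\alpha\); fix a Weyl-invariant scalar product \(\langle\cdot,\cdot\rangle\) on \(\mathfrak{X}(T)\otimes\mathbb{R}\). Let \(X\) be a projective rank one \(G\)-spherical variety with spherical lattice \(M\), let \(\sigma\) be its spherical root if \(X\) is not horospherical and any generator of \(M\) otherwise, and let \(L\) be an ample line bundle on \(X\) with moment polytope \(\Delta_+=\{\chi+t\sigma\mid t\in[s_-,s_+]\}\), where \(\chi\in\Delta_+\) and \(s_-<s_+\). Let \(R_X^+\) be the set of positive roots not vanishing identically on \(\Delta_+\), and set \[P(t)=\prod_{\alpha\in R_X^+}\frac{\langle\alpha,\chi+t\sigma\rangle}{\langle\alpha,\varpi\rangle},\qquad Q(t)=\Big(\sum_{\alpha\in R_X^+}\frac{\langle\alpha,\varpi\rangle}{\langle\alpha,\chi+t\sigma\rangle}\Big)P(t),\] and let \(a\in\mathbb{R}\) be the number such that \(P(s_-)+P(s_+)-\int_{s_-}^{s_+}2(aP(t)-Q(t))\,dt=0\). If \(P(s_+)=0\) (resp. \(P(s_-)=0\)), then \((aP-Q)(t)<0\) for all \(t\in[s_-,s_+]\) sufficiently close to \(s_+\) (resp. \(s_-\)).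
   Context: The moment polytope \(\Delta_+\) of \(L\) is the closure of the set of all \(\lambda/k\in\mathfrak{X}(T)\otimes\mathbb{R}\), where \(\lambda\) runs over weights of \(B\)-stable lines in \(H^0(X,L^{\otimes k})\), \(k\geq1\); it is a segment in an affine line with direction \(M\otimes\mathbb{R}\), contained in the positive Weyl chamber, so \(P\) and \(Q\) are positive on \(]s_-,s_+[\). For non-horospherical \(X\), the spherical root is the generator of \(M\) evaluating negatively on the (unique one-dimensional) cone of the colored fan of \(X\). *)

theory Defs
  imports "HOL-Analysis.Analysis"
begin

text \<open>Abstract combinatorial data attached to a connected reductive group G with
 Borel B and maximal torus T: the space X(T) \<otimes> R is modelled by a euclidean space
 'a whose inner product is the fixed (Weyl-invariant) scalar product.\<close>

definition reflection :: "'a::real_inner \<Rightarrow> 'a \<Rightarrow> 'a" where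
  "reflection \<alpha> x = x - (2 * inner \<alpha> x / inner \<alpha> \<alpha>) *\<^sub>R \<alpha>"

definition root_system :: "'a::euclidean_space set \<Rightarrow> bool" where
  "root_system R \<longleftrightarrow> finite R \<and> 0 \<notin> R
     \<and> (\<forall>\<alpha>\<in>R. \<forall>\<beta>\<in>R. reflection \<alpha> \<beta> \<in> R)
     \<and> (\<forall>\<alpha>\<in>R. \<forall>\<beta>\<in>R. 2 * inner \<alpha> \<beta> / inner \<alpha> \<alpha> \<in> \<int>)
     \<and> (\<forall>\<alpha>\<in>R. \<forall>c. c *\<^sub>R \<alpha> \<in> R \<longrightarrow> c = 1 \<or> c = -1)"

definition positive_system :: "'a::euclidean_space set \<Rightarrow> 'a set \<Rightarrow> bool" where
  "positive_system R Rp \<longleftrightarrow> (\<exists>h. (\<forall>\<alpha>\<in>R. inner \<alpha> h \<noteq> 0) \<and> Rp = {\<alpha>\<in>R. inner \<alpha> h > 0})"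

definition half_sum :: "'a::euclidean_space set \<Rightarrow> 'a" where
  "half_sum Rp = (1/2) *\<^sub>R (\<Sum>\<alpha>\<in>Rp. \<alpha>)"

definition pos_chamber :: "'a::euclidean_space set \<Rightarrow> 'a set" where
  "pos_chamber Rp = {x. \<forall>\<alpha>\<in>Rp. inner \<alpha> x \<ge> 0}"

definition RXp :: "'a::euclidean_space set \<Rightarrow> 'a \<Rightarrow> 'a \<Rightarrow> real \<Rightarrow> real \<Rightarrow> 'a set" where
  "RXp Rp chi sig sm sp = {\<alpha>\<in>Rp. \<exists>t\<in>{sm..sp}. inner \<alpha> (chi + t *\<^sub>R sig) \<noteq> 0}"

definition Ppoly :: "'a::euclidean_space set \<Rightarrow> 'a \<Rightarrow> 'a \<Rightarrow> 'a set \<Rightarrow> real \<Rightarrow> real" where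
  "Ppoly RX chi sig Rp t =
     (\<Prod>\<alpha>\<in>RX. inner \<alpha> (chi + t *\<^sub>R sig) / inner \<alpha> (half_sum Rp))"

definition Qfun :: "'a::euclidean_space set \<Rightarrow> 'a \<Rightarrow> 'a \<Rightarrow> 'a set \<Rightarrow> real \<Rightarrow> real" where
  "Qfun RX chi sig Rp t =
     (\<Sum>\<alpha>\<in>RX. inner \<alpha> (half_sum Rp) / inner \<alpha> (chi + t *\<^sub>R sig)) * Ppoly RX chi sig Rp t"

end

theory Submission
  imports Defs
begin

text \<open>Near an endpoint where P vanishes, some factor \<open>\<langle>\<alpha>, \<chi> + t\<sigma>\<rangle>\<close> of P tends to 0
  from above while all factors stay positive in the interior of the segment. Hence the term
  \<open>\<langle>\<alpha>, \<varpi>\<rangle> / \<langle>\<alpha>, \<chi> + t\<sigma>\<rangle>\<close> of the sum defining Q/P tends to \<open>+\<infinity>\<close>, so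
  \<open>aP - Q = (a - Q/P) P\<close> is eventually negative whatever a is. The only input from
  root systems is \<open>\<langle>\<alpha>, \<varpi>\<rangle> > 0\<close> for positive roots \<alpha>: the reflection in \<alpha> permutes the
  positive roots it keeps positive, so these contribute 0 to \<open>\<langle>\<alpha>, 2\<varpi>\<rangle>\<close>, and every other
  positive root \<beta> (including \<alpha> itself) has \<open>\<langle>\<alpha>, \<beta>\<rangle> > 0\<close>.\<close>

lemma inner_reflection_self:
  assumes "\<alpha> \<noteq> 0"
  shows "inner \<alpha> (reflection \<alpha> x) = - inner \<alpha> x"
  using assms unfolding reflection_def by (simp add: inner_diff_right)

lemma reflection_reflection:
  assumes "\<alpha> \<noteq> 0"
  shows "reflection \<alpha> (reflection \<alpha> x) = x"
  using assms unfolding reflection_def by (simp add: inner_diff_right field_simps)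

lemma reflection_self:
  assumes "\<alpha> \<noteq> 0"
  shows "reflection \<alpha> \<alpha> = - \<alpha>"
  using assms unfolding reflection_def by (simp add: algebra_simps scaleR_2)

lemma inner_half_sum_pos:
  assumes "root_system R" and "positive_system R Rp" and "\<alpha> \<in> Rp"
  shows "inner \<alpha> (half_sum Rp) > 0"
proof -
  from assms(2) obtain h where Rp: "Rp = {\<beta>\<in>R. inner \<beta> h > 0}"
    unfolding positive_system_def by blast
  have "finite R" and "0 \<notin> R" and refl_closed: "\<And>\<beta>. \<beta> \<in> R \<Longrightarrow> reflection \<alpha> \<beta> \<in> R"
    using assms Rp unfolding root_system_def by auto
  have "\<alpha> \<in> R" and "inner \<alpha> h > 0" using assms(3) Rp by auto
  with \<open>0 \<notin> R\<close> have "\<alpha> \<noteq> 0" by auto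
  then have "inner \<alpha> \<alpha> > 0" by simp
  have "finite Rp" using \<open>finite R\<close> Rp by simp
  define s where "s = reflection \<alpha>"
  define A where "A = {\<beta>\<in>Rp. s \<beta> \<in> Rp}"
  have "A \<subseteq> Rp" unfolding A_def by auto
  have "bij_betw s A A"
    by (rule bij_betw_byWitness[where f' = s])
      (auto simp: A_def s_def reflection_reflection[OF \<open>\<alpha> \<noteq> 0\<close>])
  then have "(\<Sum>\<beta>\<in>A. inner \<alpha> \<beta>) = (\<Sum>\<beta>\<in>A. inner \<alpha> (s \<beta>))"
    by (simp add: sum.reindex_bij_betw)
  also have "\<dots> = - (\<Sum>\<beta>\<in>A. inner \<alpha> \<beta>)"
    by (simp add: s_def inner_reflection_self[OF \<open>\<alpha> \<noteq> 0\<close>] sum_negf)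
  finally have sum_A: "(\<Sum>\<beta>\<in>A. inner \<alpha> \<beta>) = 0" by simp
  have pos_outside_A: "inner \<alpha> \<beta> > 0" if "\<beta> \<in> Rp - A" for \<beta>
  proof -
    have "\<beta> \<in> R" and "inner \<beta> h > 0" using that Rp by auto
    moreover have "s \<beta> \<notin> Rp" using that A_def by auto
    ultimately have "inner (s \<beta>) h \<le> 0" using refl_closed Rp s_def by auto
    then have "(2 * inner \<alpha> \<beta> / inner \<alpha> \<alpha>) * inner \<alpha> h > 0"
      using \<open>inner \<beta> h > 0\<close> unfolding s_def reflection_def by (simp add: inner_diff_left)
    with \<open>inner \<alpha> h > 0\<close> \<open>inner \<alpha> \<alpha> > 0\<close> show ?thesis
      by (metis zero_less_mult_iff zero_less_divide_iff zero_less_numeral order.asym)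
  qed
  have "\<alpha> \<in> Rp - A"
    using \<open>\<alpha> \<in> R\<close> \<open>inner \<alpha> h > 0\<close> reflection_self[OF \<open>\<alpha> \<noteq> 0\<close>] by (simp add: A_def s_def Rp)
  have "2 * inner \<alpha> (half_sum Rp) = (\<Sum>\<beta>\<in>A. inner \<alpha> \<beta>) + (\<Sum>\<beta>\<in>Rp - A. inner \<alpha> \<beta>)"
    using sum.subset_diff[OF \<open>A \<subseteq> Rp\<close> \<open>finite Rp\<close>]
    by (simp add: half_sum_def inner_sum_right add.commute)
  also have "\<dots> > 0"
    using sum_A \<open>finite Rp\<close> \<open>\<alpha> \<in> Rp - A\<close> pos_outside_A
    by (intro add_nonneg_pos sum_pos) auto
  finally show ?thesis by simp
qed

lemma affine_pos_on_interior:
  fixes b m l u t :: real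
  assumes "\<forall>s\<in>{l..u}. b + s * m \<ge> 0" and "\<exists>s\<in>{l..u}. b + s * m \<noteq> 0" and "t \<in> {l<..<u}"
  shows "b + t * m > 0"
proof (rule ccontr)
  assume "\<not> b + t * m > 0"
  moreover have "b + t * m \<ge> 0" using assms(1,3) by auto
  ultimately have "b + t * m = 0" by simp
  then have shift: "b + s * m = (s - t) * m" for s by (simp add: algebra_simps)
  have "(l - t) * m \<ge> 0" and "(u - t) * m \<ge> 0"
    using assms(1,3) by (auto simp: shift[symmetric])
  with assms(3) have "m = 0" by (auto simp: zero_le_mult_iff)
  with assms(2) shift show False by (metis mult_zero_right)
qed

lemma inner_RXp_pos:
  assumes "\<forall>s\<in>{sm..sp}. chi + s *\<^sub>R sig \<in> pos_chamber Rp"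
    and "\<alpha> \<in> RXp Rp chi sig sm sp" and "t \<in> {sm<..<sp}"
  shows "inner \<alpha> (chi + t *\<^sub>R sig) > 0"
  using affine_pos_on_interior[of sm sp "inner \<alpha> chi" "inner \<alpha> sig" t] assms
  by (auto simp: RXp_def pos_chamber_def inner_add_right)

lemma eventually_reciprocal_sum_dominates:
  fixes g :: "'b \<Rightarrow> 'c \<Rightarrow> real"
  assumes "finite I" and "\<forall>\<alpha>\<in>I. c \<alpha> > 0" and "\<alpha>0 \<in> I"
    and "\<forall>\<^sub>F t in F. \<forall>\<alpha>\<in>I. g \<alpha> t > 0" and "filterlim (g \<alpha>0) (at_right 0) F"
  shows "\<forall>\<^sub>F t in F. a * (\<Prod>\<alpha>\<in>I. g \<alpha> t / c \<alpha>)
            - (\<Sum>\<alpha>\<in>I. c \<alpha> / g \<alpha> t) * (\<Prod>\<alpha>\<in>I. g \<alpha> t / c \<alpha>) < 0"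
proof -
  have "filterlim (\<lambda>t. c \<alpha>0 * inverse (g \<alpha>0 t)) at_top F"
    using assms(2,3) by (intro filterlim_tendsto_pos_mult_at_top tendsto_const
        filterlim_compose[OF filterlim_inverse_at_top_right assms(5)]) auto
  then have "\<forall>\<^sub>F t in F. a + 1 \<le> c \<alpha>0 / g \<alpha>0 t"
    unfolding filterlim_at_top by (simp add: divide_inverse)
  with assms(4) show ?thesis
  proof eventually_elim
    case (elim t)
    have "(\<Prod>\<alpha>\<in>I. g \<alpha> t / c \<alpha>) > 0"
      using elim(1) assms(2) by (intro prod_pos) auto
    moreover have "c \<alpha>0 / g \<alpha>0 t \<le> (\<Sum>\<alpha>\<in>I. c \<alpha> / g \<alpha> t)"
      using elim(1) assms(1-3) by (intro member_le_sum) (auto simp: less_imp_le)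
    ultimately show ?case
      using elim(2) by (simp add: mult_less_0_iff flip: left_diff_distrib)
  qed
qed

lemma eventually_aP_minus_Q_neg:
  assumes "root_system R" and "positive_system R Rp"
    and "\<forall>s\<in>{sm..sp}. chi + s *\<^sub>R sig \<in> pos_chamber Rp"
    and "Ppoly (RXp Rp chi sig sm sp) chi sig Rp x = 0"
    and "F \<le> at x" and "\<forall>\<^sub>F t in F. t \<in> {sm<..<sp}"
  shows "\<forall>\<^sub>F t in F. a * Ppoly (RXp Rp chi sig sm sp) chi sig Rp t
                       - Qfun (RXp Rp chi sig sm sp) chi sig Rp t < 0"
proof -
  define RX where "RX = RXp Rp chi sig sm sp"
  define g where "g = (\<lambda>\<alpha> t. inner \<alpha> (chi + t *\<^sub>R sig))"
  define c where "c = (\<lambda>\<alpha>. inner \<alpha> (half_sum Rp))"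
  from assms(2) have "RX \<subseteq> R"
    unfolding RX_def RXp_def positive_system_def by auto
  with assms(1) have "finite RX"
    unfolding root_system_def by (auto intro: finite_subset)
  have c_pos: "\<forall>\<alpha>\<in>RX. c \<alpha> > 0"
    using inner_half_sum_pos[OF assms(1,2)] unfolding c_def RX_def RXp_def by auto
  from assms(4) \<open>finite RX\<close> obtain \<alpha>0 where "\<alpha>0 \<in> RX" and "g \<alpha>0 x = 0"
    using c_pos by (force simp: Ppoly_def RX_def g_def c_def)
  have g_pos: "\<forall>\<^sub>F t in F. \<forall>\<alpha>\<in>RX. g \<alpha> t > 0"
    using assms(6) by eventually_elim (auto simp: g_def RX_def intro: inner_RXp_pos[OF assms(3)])
  have "(g \<alpha>0 \<longlongrightarrow> g \<alpha>0 x) (at x)"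
    unfolding g_def by (intro tendsto_intros)
  then have "(g \<alpha>0 \<longlongrightarrow> 0) F"
    using tendsto_mono[OF assms(5)] \<open>g \<alpha>0 x = 0\<close> by simp
  moreover have "\<forall>\<^sub>F t in F. g \<alpha>0 t \<in> {0<..}"
    using g_pos by eventually_elim (use \<open>\<alpha>0 \<in> RX\<close> in auto)
  ultimately have "filterlim (g \<alpha>0) (at_right 0) F"
    by (auto simp: filterlim_at elim: eventually_mono)
  from eventually_reciprocal_sum_dominates[OF \<open>finite RX\<close> c_pos \<open>\<alpha>0 \<in> RX\<close> g_pos this]
  show ?thesis by (simp add: RX_def Ppoly_def Qfun_def g_def c_def)
qed

theorem lemma3p2:
  fixes R Rp :: "'a::euclidean_space set"
    and chi sig :: 'a and sm sp a :: real
  assumes "root_system R" and "positive_system R Rp"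
    and "sig \<noteq> 0" and "sm < sp"
    and "sm \<le> 0" and "0 \<le> sp"
    and "\<forall>t\<in>{sm..sp}. chi + t *\<^sub>R sig \<in> pos_chamber Rp"
    and "Ppoly (RXp Rp chi sig sm sp) chi sig Rp sm + Ppoly (RXp Rp chi sig sm sp) chi sig Rp sp
          - integral {sm..sp} (\<lambda>t. 2 * (a * Ppoly (RXp Rp chi sig sm sp) chi sig Rp t
                                       - Qfun (RXp Rp chi sig sm sp) chi sig Rp t)) = 0"
  shows "(Ppoly (RXp Rp chi sig sm sp) chi sig Rp sp = 0 \<longrightarrow>
            (\<forall>\<^sub>F t in at_left sp. a * Ppoly (RXp Rp chi sig sm sp) chi sig Rp t
                                   - Qfun (RXp Rp chi sig sm sp) chi sig Rp t < 0))
       \<and> (Ppoly (RXp Rp chi sig sm sp) chi sig Rp sm = 0 \<longrightarrow>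
            (\<forall>\<^sub>F t in at_right sm. a * Ppoly (RXp Rp chi sig sm sp) chi sig Rp t
                                   - Qfun (RXp Rp chi sig sm sp) chi sig Rp t < 0))"
  using eventually_aP_minus_Q_neg[OF assms(1,2,7) _ _ eventually_at_left_real[OF assms(4)]]
    eventually_aP_minus_Q_neg[OF assms(1,2,7) _ _ eventually_at_right_real[OF assms(4)]]
  by (simp add: at_within_le_at)

end
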